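(* Let $k\ge2$, $p\in(0,1)$, $q=1-p$. For all $n\ge1$, $$f^{(k)}_n=p^{(k-1)n}\sum_{i=0}^{n-1}\frac{n-i}{n}\binom{(k-1)n+i-1}{i}q^i.$$
   Context: Let $s^{(k)}_i=\frac{k-1}{ki-1}\binom{ki-1}{i-1}$ ($i\ge1$), $S^{(k)}(z)=\sum_{i\ge1}s^{(k)}_iz^i$, and define $f^{(k)}_0,f^{(k)}_1,\dots$ by the formal power series identity $\sum_{i\ge0}f^{(k)}_iz^i=\dfrac{1}{1-\frac1qS^{(k)}(p^{k-1}qz)}$. (In the $k$-box matchbox process with big-chooser probability $p$ and little-chooser probability $q$, $f^{(k)}_n$ is the probability that after $kn$ steps all boxes contain equal numbers of matches.) *)

theory Defs
  imports "HOL-Computational_Algebra.Formal_Power_Series"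
begin

definition s_coeff :: "nat \<Rightarrow> nat \<Rightarrow> real" where
  "s_coeff k i = (real k - 1) / (real (k * i) - 1) * real ((k * i - 1) choose (i - 1))"

definition S_fps :: "nat \<Rightarrow> real fps" where
  "S_fps k = Abs_fps (\<lambda>i. if i = 0 then 0 else s_coeff k i)"

text \<open>f^{(k)}_n: the n-th coefficient of 1/(1 - (1/q) S^{(k)}(p^{k-1} q z)).
  Substituting c z into a series multiplies the i-th coefficient by c^i.\<close>
definition f_coeff :: "nat \<Rightarrow> real \<Rightarrow> real \<Rightarrow> nat \<Rightarrow> real" where
  "f_coeff k p q n =
     fps_nth (inverse (1 - fps_const (1 / q) *
        Abs_fps (\<lambda>i. fps_nth (S_fps k) i * (p ^ (k - 1) * q) ^ i))) n"

end

theory Submission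
  imports Defs "HOL-Computational_Algebra.Formal_Laurent_Series"
begin

(*
  S^(k) is the compositional inverse of phi(z) = z (1 - z)^(k-1), so by Lagrange inversion
  n [z^n] S^j = j [z^(n-j)] (1 - z)^(-(k-1) n) = j binom((k-1) n + n - j - 1, n - j).
  Expanding 1 / (1 - S(c z) / q) with c = p^(k-1) q as a geometric series gives
  f_n = sum_(j <= n) q^(-j) c^n [z^n] S^j, and the substitution j = n - i yields the formula.

  Lagrange inversion is proved with Laurent series: differentiating S^j(phi(z)) = z^j gives
  j z^(j-1) = (S^j)'(phi) phi'; dividing by phi^n and taking residues isolates n [z^n] S^j,
  since Res(phi' phi^m / phi^(n+1)) vanishes for m < n (it is a derivative) and is 1 for m = n.
*)

lemma fls_residue_deriv_times_inverse_power:
  fixes f :: "'a::field_char_0 fls"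
  shows "fls_residue (fls_deriv f * inverse f ^ Suc j) =
    (if j = 0 then of_int (fls_subdegree f) else 0)"
proof (cases j)
  case 0
  then show ?thesis using fls_residue_deriv_times_inverse_eq_subdegree(1)[of f] by simp
next
  case (Suc i)
  have "fls_deriv (inverse f ^ Suc i) =
      of_nat (Suc i) * inverse f ^ i * (- fls_deriv f * (inverse f)\<^sup>2)"
    by (simp only: fls_deriv_power fls_inverse_deriv diff_Suc_1)
  also have "\<dots> = - of_nat (Suc i) * (fls_deriv f * inverse f ^ Suc (Suc i))"
    by (simp only: power2_eq_square power_Suc mult_ac mult_minus_left mult_minus_right)
  finally have "fls_deriv f * inverse f ^ Suc j =
      fls_const (- 1 / of_nat (Suc i)) * fls_deriv (inverse f ^ Suc i)"
    by (simp add: Suc fls_of_nat fls_const_mult_const[symmetric] mult.assoc[symmetric]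
        del: of_nat_Suc)
  then show ?thesis using Suc by (simp only: fls_residue_fls_const_times fls_residue_deriv) simp
qed

lemma fls_residue_deriv_times_power_times_inverse_power:
  fixes f :: "'a::field_char_0 fls"
  assumes "fls_subdegree f = 1" and "m \<le> n"
  shows "fls_residue (fls_deriv f * f ^ m * inverse f ^ Suc n) = (if m = n then 1 else 0)"
proof -
  have "f \<noteq> 0" using assms(1) by auto
  then have eq: "fls_deriv f * f ^ m * inverse f ^ Suc n = fls_deriv f * inverse f ^ Suc (n - m)"
    using assms(2) by (simp add: power_diff_conv_inverse mult.assoc)
  show ?thesis
    unfolding eq using assms fls_residue_deriv_times_inverse_power[of f "n - m"] by simp
qed

lemma fps_nth_times_inverse_power_conv_fls_residue:
  fixes V F :: "'a::field fps"
  assumes "V $ 0 \<noteq> 0" and "n \<ge> 1"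
  shows "(F * inverse V ^ n) $ (n - 1) =
    fls_residue (fps_to_fls F * inverse (fps_to_fls (fps_X * V)) ^ n)"
proof -
  have "inverse (fps_to_fls (fps_X * V)) = fls_X_inv * fps_to_fls (inverse V)"
    using assms(1) by (simp add: fls_times_fps_to_fls fls_inverse_X fls_inverse_fps_to_fls)
  then have "fps_to_fls F * inverse (fps_to_fls (fps_X * V)) ^ n
      = fls_X_inv ^ n * fps_to_fls (F * inverse V ^ n)"
    by (simp add: power_mult_distrib fls_times_fps_to_fls fps_to_fls_power algebra_simps)
  then show ?thesis using assms(2) by (simp add: fls_X_inv_power_times_conv_shift nat_diff_distrib')
qed

(* Here z^n V^n = phi^n, so the coefficient of z^(n-1) is the residue of phi' phi^m / phi^n. *)
lemma fps_power_times_deriv_times_inverse_power_nth: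
  fixes V :: "'a::field_char_0 fps"
  assumes "V $ 0 \<noteq> 0" and "m < n"
  defines "\<phi> \<equiv> fps_X * V"
  shows "(\<phi> ^ m * (fps_deriv \<phi> * inverse V ^ n)) $ (n - 1) = (if m = n - 1 then 1 else 0)"
proof -
  define f where "f = fps_to_fls \<phi>"
  have "subdegree \<phi> = 1"
    using assms(1) unfolding \<phi>_def by (subst subdegree_mult) auto
  then have "fls_subdegree f = 1"
    by (simp add: f_def fls_subdegree_fls_to_fps)
  moreover have "fps_to_fls (\<phi> ^ m * fps_deriv \<phi>) = fls_deriv f * f ^ m"
    by (simp add: f_def fls_times_fps_to_fls fps_to_fls_power fls_deriv_fps_to_fls mult.commute)
  ultimately show ?thesis
    using assms fps_nth_times_inverse_power_conv_fls_residue[of V n "\<phi> ^ m * fps_deriv \<phi>"]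
      fls_residue_deriv_times_power_times_inverse_power[of f m "n - 1"]
    by (simp add: f_def mult.assoc)
qed

lemma fps_compose_times_nth:
  fixes a b r :: "'a::comm_ring_1 fps"
  assumes "b $ 0 = 0"
  shows "((a oo b) * r) $ N = (\<Sum>m\<le>N. a $ m * (b ^ m * r) $ N)"
proof -
  have compose_nth: "(a oo b) $ j = (\<Sum>m\<le>N. a $ m * (b ^ m) $ j)" if "j \<le> N" for j
    unfolding fps_compose_nth atLeast0AtMost using that startsby_zero_power_prefix[OF assms]
    by (intro sum.mono_neutral_left) auto
  have "((a oo b) * r) $ N = (\<Sum>j\<le>N. \<Sum>m\<le>N. a $ m * (b ^ m) $ j * r $ (N - j))"
    by (simp add: fps_mult_nth atLeast0AtMost compose_nth sum_distrib_right)
  also have "\<dots> = (\<Sum>m\<le>N. a $ m * (b ^ m * r) $ N)"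
    by (subst sum.swap) (simp add: fps_mult_nth atLeast0AtMost sum_distrib_left mult.assoc)
  finally show ?thesis .
qed

lemma fps_compose_times_deriv_times_inverse_power_nth:
  fixes V h :: "'a::field_char_0 fps"
  assumes "V $ 0 \<noteq> 0" and "n \<ge> 1"
  defines "\<phi> \<equiv> fps_X * V"
  shows "((h oo \<phi>) * (fps_deriv \<phi> * inverse V ^ n)) $ (n - 1) = h $ (n - 1)"
proof -
  have "((h oo \<phi>) * (fps_deriv \<phi> * inverse V ^ n)) $ (n - 1)
      = (\<Sum>m\<le>n - 1. h $ m * (if m = n - 1 then 1 else 0))"
    using assms fps_power_times_deriv_times_inverse_power_nth[OF assms(1)]
    by (simp add: fps_compose_times_nth)
  also have "\<dots> = h $ (n - 1)"
    by (simp add: mult_delta_right)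
  finally show ?thesis .
qed

theorem lagrange_inversion:
  fixes V :: "'a::field_char_0 fps"
  assumes "V $ 0 \<noteq> 0" and "i \<le> n"
  shows "of_nat n * (fps_inv (fps_X * V) ^ i) $ n = of_nat i * (inverse V ^ n) $ (n - i)"
proof (cases "n = 0")
  case False
  define \<phi> where "\<phi> = fps_X * V"
  define W where "W = inverse V ^ n"
  define g where "g = fps_inv \<phi> ^ i"
  have \<phi>0: "\<phi> $ 0 = 0" and "\<phi> $ 1 \<noteq> 0"
    using assms(1) by (simp_all add: \<phi>_def)
  then have "g oo \<phi> = fps_X ^ i"
    by (simp add: g_def fps_compose_power[OF \<phi>0, symmetric] fps_inv)
  then have chain_rule:
      "fps_deriv (fps_X ^ i) * W = (fps_deriv g oo \<phi>) * (fps_deriv \<phi> * W)"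
    by (metis fps_compose_deriv[OF \<phi>0] mult.assoc)
  have "fps_deriv (fps_X ^ i) * W = fps_const (of_nat i) * (fps_X ^ (i - 1) * W)"
    by (simp add: fps_deriv_power mult.assoc)
  then have lhs: "(fps_deriv (fps_X ^ i) * W) $ (n - 1) = of_nat i * W $ (n - i)"
    using False assms(2) by (simp only:) (cases i; simp add: fps_X_power_mult_nth)
  have rhs: "((fps_deriv g oo \<phi>) * (fps_deriv \<phi> * W)) $ (n - 1) = of_nat n * g $ n"
    using False assms(1) fps_compose_times_deriv_times_inverse_power_nth[of V n "fps_deriv g"]
    by (simp add: \<phi>_def W_def)
  have "of_nat n * g $ n = of_nat i * W $ (n - i)"
    using chain_rule lhs rhs by metis
  then show ?thesis by (simp only: g_def \<phi>_def W_def)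
qed (use assms(2) in simp)

lemma inverse_one_minus_fps_X_power_power_nth:
  assumes "r > 0" and "n > 0"
  shows "(inverse ((1 - fps_X :: 'a::field_char_0 fps) ^ r) ^ n) $ j =
    of_nat ((r * n + j - 1) choose j)"
proof -
  have "inverse ((1 - fps_X) ^ r) ^ n = inverse ((1 - fps_X :: 'a fps) ^ (r * n))"
    by (simp add: power_mult fps_inverse_power)
  also have "\<dots> = Abs_fps (\<lambda>j. of_nat ((r * n + j - 1) choose j))"
    using one_minus_const_fps_X_neg_power'[of "r * n" 1] assms by simp
  finally show ?thesis by (simp only: fps_nth_Abs_fps)
qed

lemma fps_inverse_one_minus_nth:
  fixes T :: "'a::field fps"
  assumes "T $ 0 = 0"
  shows "inverse (1 - T) $ n = (\<Sum>j\<le>n. (T ^ j) $ n)"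
proof -
  have "inverse (1 - T) = inverse (1 - fps_X) oo T"
    using assms by (simp add: fps_inverse_compose fps_compose_sub_distrib)
  then show ?thesis
    by (simp add: fps_inverse_one_minus_fps_X fps_compose_nth atLeast0AtMost)
qed

lemma fps_power_scale_nth:
  fixes A :: "'a::idom fps"
  shows "(Abs_fps (\<lambda>i. A $ i * c ^ i) ^ j) $ n = c ^ n * (A ^ j) $ n"
proof -
  have "Abs_fps (\<lambda>i. A $ i * c ^ i) ^ j = (A oo (fps_const c * fps_X)) ^ j"
    unfolding fps_compose_linear by (simp add: mult.commute)
  also have "\<dots> = A ^ j oo (fps_const c * fps_X)"
    by (simp add: fps_compose_power)
  finally show ?thesis
    by (simp only: fps_compose_linear fps_nth_Abs_fps)
qed

lemma s_coeff_eq_binomial_div: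
  assumes "k \<ge> 2" and "m \<ge> 1"
  shows "s_coeff k m = real ((k * m - 2) choose (m - 1)) / real m"
proof -
  have km: "k * m \<ge> 2"
    using assms mult_le_mono[of 2 k 1 m] by simp
  have "(k * m - 1 - (m - 1)) * ((k * m - 1) choose (m - 1)) =
      (k * m - 1) * ((k * m - 2) choose (m - 1))"
    using binomial_absorb_comp[of "k * m - 1" "m - 1"] by (simp add: diff_diff_add numeral_2_eq_2)
  moreover have "k * m - 1 - (m - 1) = (k - 1) * m"
    using assms by (simp add: diff_mult_distrib)
  ultimately have "real ((k - 1) * m) * real ((k * m - 1) choose (m - 1)) =
      real (k * m - 1) * real ((k * m - 2) choose (m - 1))"
    by (metis of_nat_mult)
  then have "(real k - 1) * real m * real ((k * m - 1) choose (m - 1)) =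
      (real (k * m) - 1) * real ((k * m - 2) choose (m - 1))"
    using assms km by (simp add: of_nat_diff)
  moreover have "real (k * m) - 1 > 0"
    using km by linarith
  ultimately show ?thesis
    using assms by (simp add: s_coeff_def field_simps)
qed

lemma S_fps_eq_fps_inv:
  assumes "k \<ge> 2"
  shows "S_fps k = fps_inv (fps_X * (1 - fps_X) ^ (k - 1))"
proof (rule fps_ext)
  fix m
  show "S_fps k $ m = fps_inv (fps_X * (1 - fps_X) ^ (k - 1)) $ m"
  proof (cases "m = 0")
    case False
    have "real m * fps_inv (fps_X * (1 - fps_X) ^ (k - 1)) $ m =
        real (((k - 1) * m + (m - 1) - 1) choose (m - 1))"
      using lagrange_inversion[of "(1 - fps_X :: real fps) ^ (k - 1)" 1 m] False
        inverse_one_minus_fps_X_power_power_nth[of "k - 1" m "m - 1"] assms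
      by simp
    moreover have "(k - 1) * m + (m - 1) - 1 = k * m - 2"
      using False assms by (simp add: diff_mult_distrib)
    ultimately show ?thesis
      using False assms by (simp add: S_fps_def s_coeff_eq_binomial_div field_simps)
  qed (simp add: S_fps_def fps_inv_def)
qed

lemma S_fps_power_nth:
  assumes "k \<ge> 2" and "j \<le> n" and "n \<ge> 1"
  shows "(S_fps k ^ j) $ n = real j / real n * real (((k - 1) * n + (n - j) - 1) choose (n - j))"
  using lagrange_inversion[of "(1 - fps_X :: real fps) ^ (k - 1)" j n] assms
    inverse_one_minus_fps_X_power_power_nth[where 'a = real, of "k - 1" n "n - j"]
  by (simp add: S_fps_eq_fps_inv field_simps)

lemma f_coeff_eq_sum:
  "f_coeff k p q n = (\<Sum>j\<le>n. (1 / q) ^ j * (p ^ (k - 1) * q) ^ n * (S_fps k ^ j) $ n)"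
proof -
  define c where "c = p ^ (k - 1) * q"
  define T where "T = Abs_fps (\<lambda>i. S_fps k $ i * c ^ i)"
  have "(fps_const (1 / q) * T) $ 0 = 0"
    by (simp add: T_def S_fps_def)
  then have "f_coeff k p q n = (\<Sum>j\<le>n. ((fps_const (1 / q) * T) ^ j) $ n)"
    unfolding f_coeff_def c_def[symmetric] T_def[symmetric]
    by (rule fps_inverse_one_minus_nth)
  also have "\<dots> = (\<Sum>j\<le>n. (1 / q) ^ j * c ^ n * (S_fps k ^ j) $ n)"
    by (simp add: power_mult_distrib fps_const_power T_def fps_power_scale_nth mult.assoc)
  finally show ?thesis
    by (simp only: c_def)
qed

theorem proposition5p7:
  fixes k n :: nat and p q :: real
  assumes "k \<ge> 2" and "0 < p" and "p < 1" and "q = 1 - p" and "n \<ge> 1"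
  shows "f_coeff k p q n =
    p ^ ((k - 1) * n) *
      (\<Sum>i = 0..n - 1. (real (n - i) / real n) *
         real (((k - 1) * n + i - 1) choose i) * q ^ i)"
proof -
  define a where "a j = (1 / q) ^ j * (p ^ (k - 1) * q) ^ n * (real j / real n) *
    real (((k - 1) * n + (n - j) - 1) choose (n - j))" for j
  have weight: "(1 / q) ^ (n - i) * (p ^ (k - 1) * q) ^ n = p ^ ((k - 1) * n) * q ^ i"
    if "i \<le> n" for i
  proof -
    have "q ^ n = q ^ (n - i) * q ^ i" using that by (simp flip: power_add)
    moreover have "q \<noteq> 0" using assms by simp
    ultimately show ?thesis by (simp add: power_mult_distrib field_simps flip: power_mult)
  qed
  have "f_coeff k p q n = (\<Sum>j\<le>n. a j)"
    unfolding f_coeff_eq_sum a_def using assms by (intro sum.cong) (simp_all add: S_fps_power_nth)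
  also have "\<dots> = (\<Sum>j = 1..n. a j)"
    by (rule sum.mono_neutral_right) (auto simp: a_def)
  also have "\<dots> = (\<Sum>i = 0..n - 1. a (n - i))"
    using assms(5) by (intro sum.reindex_bij_witness[of _ "\<lambda>i. n - i" "\<lambda>i. n - i"]) auto
  also have "\<dots> = p ^ ((k - 1) * n) *
      (\<Sum>i = 0..n - 1. (real (n - i) / real n) * real (((k - 1) * n + i - 1) choose i) * q ^ i)"
    unfolding sum_distrib_left using weight
    by (intro sum.cong) (auto simp: a_def)
  finally show ?thesis .
qed

end
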